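(* Let $k=(k_1,k_2)\in\mathfrak{h}_\mathbb{C}\otimes\mathbb{C}^2$ with $k_1+ik_2\neq0$. There exists no (possibly unbounded) operator $M$ on $\mathfrak{H}$ whose domain contains the vacuum vector $\Omega$ such that $\mathbb{E}(MB)=\mathbb{E}(D_kB)$ holds for all $B\in\mathrm{Dom}\,D_k$, where $\mathbb{E}(X)=\langle\Omega,X\Omega\rangle$.
   Context: $\mathfrak{h}$ is a real separable Hilbert space, $\mathfrak{h}_\mathbb{C}$ its complexification (inner products antilinear in the first argument), with conjugation $\overline{h_1+ih_2}=h_1-ih_2$. $\mathfrak{H}=\Gamma_s(\mathfrak{h}_\mathbb{C})$ is the symmetric Fock space with vacuum $\Omega$ and exponential vectors $\mathcal{E}(k)=\sum_nk^{\otimes n}/\sqrt{n!}$. $a(h),a^+(h)$ are annihilation/creation operators ($a(h)\mathcal{E}(g)=\langle h,g\rangle\mathcal{E}(g)$, $a^+(h)=a(h)^*$), $Q(h)=a(\overline h)+a^+(h)$, $P(h)=i(a(\overline h)-a^+(h))$. An expression $\sum_jX_jB_jY_j$ (with $X_j,Y_j$ defined on exponential vectors together with their adjoints, $B_j$ bounded) defines a bounded operator $M$ if $\langle\mathcal{E}(f),M\mathcal{E}(g)\rangle=\sum_j\langle X_j^*\mathcal{E}(f),B_jY_j\mathcal{E}(g)\rangle$ for all $f,g\in\mathfrak{h}_\mathbb{C}$. For $k=(k_1,k_2)\in\mathfrak{h}_\mathbb{C}\otimes\mathbb{C}^2$, $\mathrm{Dom}\,D_k$ is the set of $B\in\mathcal{B}(\mathfrak{H})$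 such that $\frac i2[Q(k_1)-P(k_2),B]$ defines a bounded operator, and $D_kB$ is that operator. *)

theory Defs
  imports "HOL-Analysis.Analysis"
begin

text \<open>Complex Hilbert spaces are modelled as real Hilbert spaces carrying a complex
structure J (multiplication by the imaginary unit): orthogonal, linear, J o J = -id.\<close>

definition complex_structure :: "('a::real_inner \<Rightarrow> 'a) \<Rightarrow> bool" where
  "complex_structure J \<longleftrightarrow> linear J \<and> (\<forall>v. J (J v) = - v) \<and>
      (\<forall>v w. inner (J v) (J w) = inner v w)"

definition cscale :: "('a::real_vector \<Rightarrow> 'a) \<Rightarrow> complex \<Rightarrow> 'a \<Rightarrow> 'a" where
  "cscale J c v = Re c *\<^sub>R v + Im c *\<^sub>R J v"

text \<open>Complex inner product induced by J, antilinear in the first argument.\<close>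
definition cinner :: "('a::real_inner \<Rightarrow> 'a) \<Rightarrow> 'a \<Rightarrow> 'a \<Rightarrow> complex" where
  "cinner J v w = Complex (inner v w) (- inner v (J w))"

text \<open>Complexification of the real Hilbert space h: pairs (h1,h2) standing for h1 + i h2.\<close>
definition hJ :: "'h::real_vector \<times> 'h \<Rightarrow> 'h \<times> 'h" where
  "hJ p = (- snd p, fst p)"

definition hconj :: "'h::real_vector \<times> 'h \<Rightarrow> 'h \<times> 'h" where
  "hconj p = (fst p, - snd p)"

definition separable :: "'a::topological_space itself \<Rightarrow> bool" where
  "separable _ \<longleftrightarrow> (\<exists>D::'a set. countable D \<and> closure D = UNIV)"

text \<open>A model of the symmetric Fock space over h_C: a complex Hilbert space (F,J) with the
exponential-vector map E satisfying <E f, E g> = exp <f,g>, with total exponential vectors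
(unique up to unitary equivalence); the smoothness of E along real lines (true in Fock space)
is recorded so that creation operators on exponential vectors can be written as derivatives.\<close>
definition fock_model :: "('F::{real_inner,complete_space} \<Rightarrow> 'F) \<Rightarrow>
    ('h::{real_inner,complete_space} \<times> 'h \<Rightarrow> 'F) \<Rightarrow> bool" where
  "fock_model J E \<longleftrightarrow> complex_structure J \<and>
     (\<forall>f g. cinner J (E f) (E g) = exp (cinner hJ f g)) \<and>
     closure (span (range E \<union> J ` range E)) = UNIV \<and>
     (\<forall>f h. (\<lambda>t::real. E (f + t *\<^sub>R h)) differentiable (at 0))"

definition annE :: "('F::real_inner \<Rightarrow> 'F) \<Rightarrow> ('h::real_inner \<times> 'h \<Rightarrow> 'F) \<Rightarrow>
    'h \<times> 'h \<Rightarrow> 'h \<times> 'h \<Rightarrow> 'F" where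
  "annE J E h f = cscale J (cinner hJ h f) (E f)"

definition creE :: "('h::real_vector \<times> 'h \<Rightarrow> 'F::real_normed_vector) \<Rightarrow>
    'h \<times> 'h \<Rightarrow> 'h \<times> 'h \<Rightarrow> 'F" where
  "creE E h f = vector_derivative (\<lambda>t::real. E (f + t *\<^sub>R h)) (at 0)"

definition QE :: "('F::real_inner \<Rightarrow> 'F) \<Rightarrow> ('h::real_inner \<times> 'h \<Rightarrow> 'F) \<Rightarrow>
    'h \<times> 'h \<Rightarrow> 'h \<times> 'h \<Rightarrow> 'F" where
  "QE J E h f = annE J E (hconj h) f + creE E h f"

definition PE :: "('F::real_inner \<Rightarrow> 'F) \<Rightarrow> ('h::real_inner \<times> 'h \<Rightarrow> 'F) \<Rightarrow>
    'h \<times> 'h \<Rightarrow> 'h \<times> 'h \<Rightarrow> 'F" where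
  "PE J E h f = cscale J \<i> (annE J E (hconj h) f - creE E h f)"

definition cbounded :: "('F::real_normed_vector \<Rightarrow> 'F) \<Rightarrow> ('F \<Rightarrow> 'F) \<Rightarrow> bool" where
  "cbounded J B \<longleftrightarrow> bounded_linear B \<and> (\<forall>v. B (J v) = J (B v))"

text \<open>C is the bounded operator defined by (i/2)[Q(k1) - P(k2), B], i.e.
  <E f, C E g> = (i/2) ( <X^* E f, B E g> - <E f, B X E g> ),  X = Q(k1) - P(k2),
  where on exponential vectors X^* = Q(conj k1) - P(conj k2).\<close>
definition Dk_rel :: "('F::{real_inner,complete_space} \<Rightarrow> 'F) \<Rightarrow>
    ('h::{real_inner,complete_space} \<times> 'h \<Rightarrow> 'F) \<Rightarrow>
    ('h \<times> 'h) \<Rightarrow> ('h \<times> 'h) \<Rightarrow> ('F \<Rightarrow> 'F) \<Rightarrow> ('F \<Rightarrow> 'F) \<Rightarrow> bool" where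
  "Dk_rel J E k1 k2 B C \<longleftrightarrow> cbounded J C \<and>
     (\<forall>f g. cinner J (E f) (C (E g)) =
        (\<i> / 2) * (cinner J (QE J E (hconj k1) f - PE J E (hconj k2) f) (B (E g))
                   - cinner J (E f) (B (QE J E k1 g - PE J E k2 g))))"

definition DomD :: "('F::{real_inner,complete_space} \<Rightarrow> 'F) \<Rightarrow>
    ('h::{real_inner,complete_space} \<times> 'h \<Rightarrow> 'F) \<Rightarrow>
    ('h \<times> 'h) \<Rightarrow> ('h \<times> 'h) \<Rightarrow> ('F \<Rightarrow> 'F) set" where
  "DomD J E k1 k2 = {B. cbounded J B \<and> (\<exists>C. Dk_rel J E k1 k2 B C)}"

definition Dk :: "('F::{real_inner,complete_space} \<Rightarrow> 'F) \<Rightarrow>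
    ('h::{real_inner,complete_space} \<times> 'h \<Rightarrow> 'F) \<Rightarrow>
    ('h \<times> 'h) \<Rightarrow> ('h \<times> 'h) \<Rightarrow> ('F \<Rightarrow> 'F) \<Rightarrow> ('F \<Rightarrow> 'F)" where
  "Dk J E k1 k2 B = (THE C. Dk_rel J E k1 k2 B C)"

definition vexp :: "('F::{real_inner,complete_space} \<Rightarrow> 'F) \<Rightarrow>
    ('h::{real_inner,complete_space} \<times> 'h \<Rightarrow> 'F) \<Rightarrow> ('F \<Rightarrow> 'F) \<Rightarrow> complex" where
  "vexp J E X = cinner J (E 0) (X (E 0))"

definition lin_op_on :: "('F::real_vector \<Rightarrow> 'F) \<Rightarrow> 'F set \<Rightarrow> ('F \<Rightarrow> 'F) \<Rightarrow> bool" where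
  "lin_op_on J D M \<longleftrightarrow> subspace D \<and> J ` D \<subseteq> D \<and>
     (\<forall>x\<in>D. \<forall>y\<in>D. M (x + y) = M x + M y) \<and>
     (\<forall>c. \<forall>x\<in>D. M (cscale J c x) = cscale J c (M x))"

end

(* Let k = k1 + i k2 and B = |Omega><E(k) - Omega|. Since <E(k), Omega> = e^0 = <Omega, Omega>,
   B annihilates the vacuum, so any M as in the statement forces E(D_k B) = <Omega, M 0> = 0.
   But the commutator of X = Q(k1) - P(k2) with a rank-one operator has rank at most two, so
   B lies in Dom D_k, and E(D_k B) = -(i/2) <E(k) - Omega, X Omega> = -(i/2) |k|^2, because
   <E(f), X Omega> = <f, k>. *)
theory Submission
  imports Defs
begin

lemma cinner_zero_left [simp]: "cinner J 0 v = 0"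
  by (simp add: cinner_def complex_eq_iff)

lemma cinner_diff_left: "cinner J (x - y) v = cinner J x v - cinner J y v"
  by (simp add: cinner_def inner_diff_left complex_eq_iff)

text \<open>The rank-one operator written |b\<rangle>\<langle>a| in bra-ket notation.\<close>
definition rank_one :: "('a::real_inner \<Rightarrow> 'a) \<Rightarrow> 'a \<Rightarrow> 'a \<Rightarrow> 'a \<Rightarrow> 'a" where
  "rank_one J a b v = cscale J (cinner J a v) b"

locale complex_structured =
  fixes J :: "'a::real_inner \<Rightarrow> 'a"
  assumes complex_structure: "complex_structure J"
begin

lemma linear_J: "linear J"
  using complex_structure by (simp add: complex_structure_def)

lemma J_J [simp]: "J (J v) = - v"
  using complex_structure by (simp add: complex_structure_def)

lemma inner_J_J: "inner (J v) (J w) = inner v w"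
  using complex_structure by (simp add: complex_structure_def)

lemma inner_J_left: "inner (J v) w = - inner v (J w)"
  by (metis J_J inner_J_J inner_minus_left)

lemma bounded_linear_J: "bounded_linear J"
proof (rule bounded_linear_intro[where K = 1])
  show "J (x + y) = J x + J y" "J (r *\<^sub>R x) = r *\<^sub>R J x" for x y r
    by (simp_all add: linear_add[OF linear_J] linear_scale[OF linear_J])
  show "norm (J x) \<le> norm x * 1" for x
    by (simp add: norm_eq_sqrt_inner inner_J_J)
qed

lemma cinner_add_right: "cinner J v (x + y) = cinner J v x + cinner J v y"
  by (simp add: cinner_def linear_add[OF linear_J] inner_add_right complex_eq_iff)

lemma cinner_diff_right: "cinner J v (x - y) = cinner J v x - cinner J v y"
  by (simp add: cinner_def linear_diff[OF linear_J] inner_diff_right complex_eq_iff)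

lemma cinner_zero_right [simp]: "cinner J v 0 = 0"
  by (simp add: cinner_def linear_0[OF linear_J] complex_eq_iff)

lemma cinner_scaleR_right: "cinner J v (r *\<^sub>R w) = of_real r * cinner J v w"
  by (simp add: cinner_def linear_scale[OF linear_J] complex_eq_iff)

lemma cinner_cscale_right: "cinner J v (cscale J c w) = c * cinner J v w"
  by (simp add: cinner_def cscale_def linear_add[OF linear_J] linear_scale[OF linear_J]
      inner_add_right complex_eq_iff algebra_simps)

lemma cinner_commute: "cinner J w v = cnj (cinner J v w)"
  using inner_J_left[of v w] by (simp add: cinner_def complex_eq_iff inner_commute)

lemma cinner_self: "cinner J v v = of_real (inner v v)"
  using inner_J_left[of v v] by (simp add: cinner_def complex_eq_iff inner_commute)

lemma J_cscale: "J (cscale J c v) = cscale J (\<i> * c) v"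
  by (simp add: cscale_def linear_add[OF linear_J] linear_scale[OF linear_J])

lemma bounded_linear_cinner_right: "bounded_linear (cinner J w)"
proof -
  have "bounded_linear (\<lambda>v. inner w v *\<^sub>R 1 - inner w (J v) *\<^sub>R \<i>)"
    by (intro bounded_linear_intros bounded_linear_J)
  moreover have "(\<lambda>v. inner w v *\<^sub>R 1 - inner w (J v) *\<^sub>R \<i>) = cinner J w"
    by (auto simp: cinner_def complex_eq_iff)
  ultimately show ?thesis by simp
qed

lemma cinner_rank_one: "cinner J x (rank_one J a b v) = cinner J a v * cinner J x b"
  by (simp add: rank_one_def cinner_cscale_right)

lemma cbounded_rank_one: "cbounded J (rank_one J a b)"
  unfolding cbounded_def
proof
  have "bounded_linear (\<lambda>v. Re (cinner J a v) *\<^sub>R b + Im (cinner J a v) *\<^sub>R J b)"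
    using bounded_linear_compose[OF bounded_linear_Re bounded_linear_cinner_right]
      bounded_linear_compose[OF bounded_linear_Im bounded_linear_cinner_right]
    by (intro bounded_linear_intros) (simp_all add: o_def)
  moreover have "(\<lambda>v. Re (cinner J a v) *\<^sub>R b + Im (cinner J a v) *\<^sub>R J b) = rank_one J a b"
    by (auto simp: rank_one_def cscale_def)
  ultimately show "bounded_linear (rank_one J a b)" by simp
  have "cinner J a (J v) = \<i> * cinner J a v" for v
    using cinner_cscale_right[of a \<i> v] by (simp add: cscale_def)
  then show "\<forall>v. rank_one J a b (J v) = J (rank_one J a b v)"
    by (simp add: rank_one_def J_cscale)
qed

lemma cbounded_diff:
  assumes "cbounded J B1" and "cbounded J B2"
  shows "cbounded J (\<lambda>v. B1 v - B2 v)"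
  using assms unfolding cbounded_def
  by (auto intro: bounded_linear_sub simp: linear_diff[OF linear_J])

end

interpretation hJ: complex_structured hJ
  unfolding complex_structured_def complex_structure_def
proof (intro conjI allI)
  show "linear hJ" by (rule linearI) (auto simp: hJ_def)
qed (auto simp: hJ_def inner_prod_def)

lemma hconj_hconj [simp]: "hconj (hconj a) = a"
  by (simp add: hconj_def)

lemma bounded_linear_eq_0_on_dense_span:
  assumes "bounded_linear f" and "\<And>s. s \<in> S \<Longrightarrow> f s = 0" and "closure (span S) = UNIV"
  shows "f x = 0"
proof (rule continuous_constant_on_closure[where S = "span S"])
  show "continuous_on (closure (span S)) f"
    using assms(1) by (simp add: linear_continuous_on)
  show "y \<in> span S \<Longrightarrow> f y = 0" for y
    using assms(1,2) by (blast intro: bounded_linear.linear real_vector.linear_eq_0_on_span)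
  show "x \<in> closure (span S)"
    using assms(3) by simp
qed

lemma lin_op_on_zero:
  assumes "lin_op_on J D M"
  shows "M 0 = 0"
proof -
  have "0 \<in> D" and "M (0 + 0) = M 0 + M 0"
    using assms subspace_0 unfolding lin_op_on_def by blast+
  then show ?thesis by simp
qed

definition XE :: "('F::real_inner \<Rightarrow> 'F) \<Rightarrow> ('h::real_inner \<times> 'h \<Rightarrow> 'F) \<Rightarrow>
    'h \<times> 'h \<Rightarrow> 'h \<times> 'h \<Rightarrow> 'h \<times> 'h \<Rightarrow> 'F" where
  "XE J E k1 k2 f = QE J E k1 f - PE J E k2 f"

locale fock_space =
  fixes J :: "'F::{real_inner,complete_space} \<Rightarrow> 'F"
    and E :: "'h::{real_inner,complete_space} \<times> 'h \<Rightarrow> 'F"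
  assumes fock_model: "fock_model J E"
begin

sublocale complex_structured J
  using fock_model by unfold_locales (simp add: fock_model_def)

lemma cinner_E_E: "cinner J (E f) (E g) = exp (cinner hJ f g)"
  using fock_model unfolding fock_model_def by blast

lemma exponentials_total: "closure (span (range E \<union> J ` range E)) = UNIV"
  using fock_model by (simp add: fock_model_def)

lemma cinner_annE: "cinner J (E f) (annE J E h g) = cinner hJ h g * exp (cinner hJ f g)"
  by (simp add: annE_def cinner_cscale_right cinner_E_E)

lemma cinner_creE: "cinner J (E f) (creE E h g) = cinner hJ f h * exp (cinner hJ f g)"
proof -
  have "(\<lambda>t::real. E (g + t *\<^sub>R h)) differentiable (at 0)"
    using fock_model unfolding fock_model_def by blast
  then have "((\<lambda>t::real. E (g + t *\<^sub>R h)) has_vector_derivative creE E h g) (at 0)"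
    unfolding creE_def by (simp add: vector_derivative_works)
  then have 1: "((\<lambda>t. cinner J (E f) (E (g + t *\<^sub>R h)))
      has_vector_derivative cinner J (E f) (creE E h g)) (at 0)"
    by (rule bounded_linear.has_vector_derivative[OF bounded_linear_cinner_right])
  have eq: "(\<lambda>t. cinner J (E f) (E (g + t *\<^sub>R h)))
      = (\<lambda>t. (\<lambda>z. exp (cinner hJ f g + z * cinner hJ f h)) (of_real t))"
    by (simp add: cinner_E_E hJ.cinner_add_right hJ.cinner_scaleR_right)
  have "((\<lambda>z. exp (cinner hJ f g + z * cinner hJ f h))
      has_field_derivative cinner hJ f h * exp (cinner hJ f g)) (at (of_real 0))"
    by (auto intro!: derivative_eq_intros)
  then have 2: "((\<lambda>t. cinner J (E f) (E (g + t *\<^sub>R h)))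
      has_vector_derivative cinner hJ f h * exp (cinner hJ f g)) (at 0)"
    unfolding eq by (rule has_vector_derivative_real_field)
  show ?thesis
    using vector_derivative_unique_at[OF 1 2] .
qed

lemma cinner_XE:
  "cinner J (E f) (XE J E a b g) =
    (cinner hJ (hconj a) g + cinner hJ f a - \<i> * cinner hJ (hconj b) g + \<i> * cinner hJ f b)
      * exp (cinner hJ f g)"
  by (simp add: XE_def QE_def PE_def cinner_diff_right cinner_add_right cinner_cscale_right
      cinner_annE cinner_creE algebra_simps)

lemma cinner_XE_vacuum: "cinner J (E f) (XE J E k1 k2 0) = cinner hJ f (k1 + cscale hJ \<i> k2)"
  by (simp add: cinner_XE hJ.cinner_add_right hJ.cinner_cscale_right)

lemma cinner_XE_adjoint:
  "cinner J (XE J E (hconj a) (hconj b) f) (E g) = cinner J (E f) (XE J E a b g)"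
proof -
  have "cinner J (XE J E (hconj a) (hconj b) f) (E g)
      = cnj (cinner J (E g) (XE J E (hconj a) (hconj b) f))"
    by (rule cinner_commute)
  also have "\<dots> = cinner J (E f) (XE J E a b g)"
    by (simp add: cinner_XE exp_cnj hJ.cinner_commute[of g f] hJ.cinner_commute[of g "hconj a"]
        hJ.cinner_commute[of g "hconj b"] hJ.cinner_commute[of a f] hJ.cinner_commute[of b f]
        algebra_simps)
  finally show ?thesis .
qed

lemma orthogonal_exponentials_eq_0:
  assumes "\<And>f. cinner J (E f) w = 0"
  shows "w = 0"
proof -
  have "inner s w = 0" if "s \<in> range E \<union> J ` range E" for s
    using that assms by (auto simp: cinner_def complex_eq_iff inner_J_left)
  then have "inner w w = 0"
    using bounded_linear_eq_0_on_dense_span[OF bounded_linear_inner_left _ exponentials_total]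
    by blast
  then show ?thesis by simp
qed

lemma cbounded_eq_on_exponentials:
  assumes "cbounded J C1" and "cbounded J C2"
    and "\<And>f g. cinner J (E f) (C1 (E g)) = cinner J (E f) (C2 (E g))"
  shows "C1 = C2"
proof
  fix v
  define C where "C = (\<lambda>v. C1 v - C2 v)"
  have C: "bounded_linear C" "\<And>v. C (J v) = J (C v)"
    using cbounded_diff[OF assms(1,2)] by (simp_all add: C_def cbounded_def)
  have "C (E g) = 0" for g
    by (rule orthogonal_exponentials_eq_0) (simp add: C_def cinner_diff_right assms(3))
  then have "C s = 0" if "s \<in> range E \<union> J ` range E" for s
    using that C(2) by (auto simp: linear_0[OF linear_J])
  then have "C v = 0"
    using bounded_linear_eq_0_on_dense_span[OF C(1) _ exponentials_total] by blast
  then show "C1 v = C2 v" by (simp add: C_def)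
qed

lemma Dk_eqI:
  assumes "Dk_rel J E k1 k2 B C"
  shows "Dk J E k1 k2 B = C"
  unfolding Dk_def
proof (rule the_equality[where P = "Dk_rel J E k1 k2 B", OF assms])
  show "C' = C" if "Dk_rel J E k1 k2 B C'" for C'
    using that assms by (auto simp only: Dk_rel_def intro!: cbounded_eq_on_exponentials)
qed

text \<open>The commutator (i/2)[X, |b\<rangle>\<langle>a|] = (i/2)(|Xb\<rangle>\<langle>a| - |b\<rangle>\<langle>X*a|),
  with a' and b' playing X*a and Xb (tested against exponential vectors).\<close>
lemma Dk_rel_rank_one:
  assumes "\<And>g. cinner J a (XE J E k1 k2 g) = cinner J a' (E g)"
    and "\<And>f. cinner J (XE J E (hconj k1) (hconj k2) f) b = cinner J (E f) b'"
  shows "Dk_rel J E k1 k2 (rank_one J a b)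
      (\<lambda>v. rank_one J a (cscale J (\<i> / 2) b') v - rank_one J a' (cscale J (\<i> / 2) b) v)"
  unfolding Dk_rel_def XE_def[symmetric]
  using assms
  by (simp add: cbounded_diff cbounded_rank_one cinner_diff_right cinner_rank_one
      cinner_cscale_right algebra_simps)

lemma rank_one_vacuum_Dk:
  fixes k1 k2 k :: "'h \<times> 'h"
  assumes k: "k = k1 + cscale hJ \<i> k2"
  defines "B \<equiv> rank_one J (E k - E 0) (E 0)"
  shows "B \<in> DomD J E k1 k2" and "B (E 0) = 0"
    and "vexp J E (Dk J E k1 k2 B) = - (\<i> / 2) * of_real (inner k k)"
proof -
  define a' where "a' = XE J E (hconj k1) (hconj k2) k - XE J E (hconj k1) (hconj k2) 0"
  define C where "C v = rank_one J (E k - E 0) (cscale J (\<i> / 2) (XE J E k1 k2 0)) v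
      - rank_one J a' (cscale J (\<i> / 2) (E 0)) v" for v
  have a': "cinner J (E k - E 0) (XE J E k1 k2 g) = cinner J a' (E g)" for g
    by (simp add: a'_def cinner_diff_left cinner_XE_adjoint)
  have rel: "Dk_rel J E k1 k2 B C"
    unfolding B_def C_def
    by (rule Dk_rel_rank_one[OF a']) (simp add: cinner_XE_adjoint)
  then show "B \<in> DomD J E k1 k2"
    by (auto simp: DomD_def B_def cbounded_rank_one)
  have orth: "cinner J (E k - E 0) (E 0) = 0"
    by (simp add: cinner_diff_left cinner_E_E)
  then show "B (E 0) = 0"
    by (simp add: B_def rank_one_def cscale_def)
  have "cinner J a' (E 0) = cinner hJ k k"
    by (simp add: a'[symmetric] cinner_diff_left cinner_XE_vacuum k)
  then show "vexp J E (Dk J E k1 k2 B) = - (\<i> / 2) * of_real (inner k k)"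
    by (simp add: Dk_eqI[OF rel] vexp_def C_def cinner_diff_right cinner_rank_one
        cinner_cscale_right orth cinner_E_E hJ.cinner_self)
qed

end

theorem proposition6p1:
  fixes J :: "'F::{real_inner,complete_space} \<Rightarrow> 'F"
    and E :: "'h::{real_inner,complete_space} \<times> 'h \<Rightarrow> 'F"
    and k1 k2 :: "'h \<times> 'h"
  assumes "separable TYPE('h)"
    and "fock_model J E"
    and "k1 + cscale hJ \<i> k2 \<noteq> 0"
  shows "\<not> (\<exists>D M. lin_op_on J D M \<and> E 0 \<in> D \<and>
            (\<forall>B \<in> DomD J E k1 k2. B (E 0) \<in> D \<and>
               cinner J (E 0) (M (B (E 0))) = vexp J E (Dk J E k1 k2 B)))"
proof
  assume "\<exists>D M. lin_op_on J D M \<and> E 0 \<in> D \<and>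
            (\<forall>B \<in> DomD J E k1 k2. B (E 0) \<in> D \<and>
               cinner J (E 0) (M (B (E 0))) = vexp J E (Dk J E k1 k2 B))"
  then obtain D M where "lin_op_on J D M"
    and M: "\<forall>B \<in> DomD J E k1 k2. cinner J (E 0) (M (B (E 0))) = vexp J E (Dk J E k1 k2 B)"
    by blast
  then have "M 0 = 0" by (simp add: lin_op_on_zero)
  interpret fock_space J E by (rule fock_space.intro) (fact assms(2))
  have "vexp J E (Dk J E k1 k2 B) = 0" if "B \<in> DomD J E k1 k2" and "B (E 0) = 0" for B
    using M that \<open>M 0 = 0\<close> by (metis cinner_zero_right)
  from this[OF rank_one_vacuum_Dk(1,2)[OF refl]] rank_one_vacuum_Dk(3)[OF refl] assms(3)
  show False by simp
qed

end
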